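(* Let $m\in\pi^*(N)\subseteq M$ and $\theta\in M^{\mathrm{prin}}_{\mathbb R}\setminus\mathrm{Supp}(\mathfrak D)$. Then every broken line contributing to $\vartheta_{(0,m),\theta}$, after projection along $M^{\mathrm{prin}}_{\mathbb R}=M_{\mathbb R}\oplus N_{\mathbb R}\to M_{\mathbb R}$, is contained in $\bar\theta+\pi^*(N_{\mathbb R})$, where $\bar\theta$ is the projection of $\theta$.
   Context: $Q$ finite quiver without loops or oriented 2-cycles, $W$ a finite potential; $N=\mathbb Z^{Q_0}$ with basis $e_i$, $M=\mathrm{Hom}(N,\mathbb Z)$, $N^+$ the nonzero nonnegative vectors; $B(e_i,e_j)=a_{ji}-a_{ij}$ ($a_{ij}$ arrows $i\to j$); $\pi^*:N\to M$, $\pi^*(n)=B(\cdot,n)$. $H_{\mathrm{reg}}(Q,W)$ is the regular part (over $\mathbb C_{\mathrm{reg}}(t)$, $q=t^2$) of Joyce's motivic Hall algebra of representations of $(Q,W)$, graded by dimension vector; $\mathfrak g^{\mathrm{Hall}}=(t-t^{-1})^{-1}\bigoplus_{d\in N^+}H_{\mathrm{reg}}(Q,W)_d$ with commutator bracket; $1_{\mathrm{sst}}(\theta)$ is the Hall algebra element of $\theta$-semistable objects. Principal coefficients: $N^{\mathrm{prin}}=N\oplus M$, $M^{\mathrm{prin}}=M\oplus N$, $B^{\mathrm{prin}}((n_1,m_1),(n_2,m_2))=B(n_1,n_2)-\langle n_1,m_2\rangle+\langle n_2,m_1\rangle$, $p^{*,\mathrm{prin}}(n,m)=(\pi^*(n)-m,n)$.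 $A=A^{\mathrm{Hall,prin}}=H_{\mathrm{reg}}(Q,W)\otimes\mathbb C_{\mathrm{reg}}(t)[M]$ with $a_d*z^m=q^{-\langle d,m\rangle}z^m*a_d$, graded by $N^{\mathrm{prin}}$ ($a_dz^m$ in degree $(d,m)$), with $\mathfrak g^{\mathrm{Hall}}$ (in degrees $(N^+,0)$) acting by commutators. $\mathfrak D=\mathfrak D^{\mathrm{Hall,prin}}_{\mathrm{scat}}$ is a consistent scattering diagram in $M^{\mathrm{prin}}_{\mathbb R}$ over $\widehat{\mathfrak g}^{\mathrm{Hall}}$ (walls $(\mathfrak d,g_{\mathfrak d})$ with $n_{\mathfrak d}\in(N^+,0)$ primitive, $g_{\mathfrak d}\in\prod_k\mathfrak g_{kn_{\mathfrak d}}$, $\mathfrak d$ a codimension-one rational polyhedral affine cone parallel to $n_{\mathfrak d}^\perp$) containing the walls $((e_i,0)^\perp,\log 1_{\mathrm{sst}}(\pi^*(e_i)))$, all other walls being outgoing (not containing $p^{*,\mathrm{prin}}(n_{\mathfrak d})$); assume it exists. A broken line with ends $(\lambda,\theta)$: continuous $\gamma:(-\infty,0]\to M^{\mathrm{prin}}_{\mathbb R}\setminus\mathrm{Joints}(\mathfrak D)$, times $-\infty=t_{-1}<t_0\le\dots\le t_\ell=0$, homogeneous $a_i\in A_{\lambda_i}$, $\lambda_i\ne0$, with $\lambda_0=\lambda$, $\gamma(0)=\theta$, $\gamma'(t)=-p^{*,\mathrm{prin}}(\lambda_i)$ on $(t_{i-1},t_i)$, $a_0=z^\lambda$, $\gamma(t_i)\in\mathrm{Supp}(\mathfrak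 D)$ for $i<\ell$, and $a_{i+1}$ a homogeneous term of $g_i\cdot a_i$ other than $a_i$, where $g_i=\prod_{\mathfrak d\ni\gamma(t_i)}\exp(g_{\mathfrak d})^{\mathrm{sign}\langle n_{\mathfrak d},p^{*,\mathrm{prin}}(\lambda)\rangle}$ acting on the completion of $A$. The broken lines contributing to $\vartheta_{\lambda,\theta}$ are all broken lines with ends $(\lambda,\theta)$. *)

theory Defs
  imports "HOL-Analysis.Analysis"
begin

text \<open>Vertices of the quiver form a finite type 'i. The lattices
N = Z^Q0 and M = Hom(N,Z) are both realised inside real^'i (M identified via the
dual basis, the pairing is the inner product). N^prin = N + M and
M^prin_R = M_R + N_R are both represented as pairs real^'i * real^'i.
The quiver is given by a :: 'i => 'i => nat, a i j = number of arrows i -> j.\<close>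

type_synonym 'i vpair = "(real^'i) \<times> (real^'i)"

definition integral_vec :: "real^('i::finite) \<Rightarrow> bool" where
  "integral_vec v \<longleftrightarrow> (\<forall>i. v $ i \<in> \<int>)"

definition integral_pair :: "('i::finite) vpair \<Rightarrow> bool" where
  "integral_pair v \<longleftrightarrow> integral_vec (fst v) \<and> integral_vec (snd v)"

text \<open>pi^*(n) = B(-,n), with B(e_i,e_j) = a_ji - a_ij.\<close>
definition piS :: "('i::finite \<Rightarrow> 'i \<Rightarrow> nat) \<Rightarrow> real^'i \<Rightarrow> real^'i" where
  "piS a n = (\<chi> i. \<Sum>j\<in>UNIV. n $ j * (real (a j i) - real (a i j)))"

definition pprin :: "('i::finite \<Rightarrow> 'i \<Rightarrow> nat) \<Rightarrow> 'i vpair \<Rightarrow> 'i vpair" where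
  "pprin a l = (piS a (fst l) - snd l, fst l)"

definition Nplus :: "real^('i::finite) \<Rightarrow> bool" where
  "Nplus n \<longleftrightarrow> integral_vec n \<and> (\<forall>i. n $ i \<ge> 0) \<and> n \<noteq> 0"

definition primitive_vec :: "real^('i::finite) \<Rightarrow> bool" where
  "primitive_vec n \<longleftrightarrow> integral_vec n \<and>
     (\<forall>(k::int) n'. integral_vec n' \<and> n = of_int k *\<^sub>R n' \<longrightarrow> k = 1 \<or> k = -1)"

definition rat_poly_cone :: "('i::finite) vpair set \<Rightarrow> bool" where
  "rat_poly_cone C \<longleftrightarrow> (\<exists>S. finite S \<and> (\<forall>v\<in>S. integral_pair v) \<and>
      C = {(\<Sum>v\<in>S. c v *\<^sub>R v) | c. \<forall>v\<in>S. c v \<ge> 0})"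

text \<open>Abstract N^prin-graded real algebra A (the coefficient field C_reg(t) contains R):
Hom l is the homogeneous component A_l.\<close>
definition graded_alg :: "(('i::finite) vpair \<Rightarrow> 'v::real_algebra_1 set) \<Rightarrow> bool" where
  "graded_alg Hom \<longleftrightarrow> (\<forall>l. subspace (Hom l)) \<and> 1 \<in> Hom 0 \<and>
     (\<forall>l l' x y. x \<in> Hom l \<longrightarrow> y \<in> Hom l' \<longrightarrow> x * y \<in> Hom (l + l'))"

text \<open>An element G of prod_k g_{k n} is given by its components G k in degree (k n, 0), k >= 1.\<close>
definition in_gprod :: "(('i::finite) vpair \<Rightarrow> 'v::real_algebra_1 set) \<Rightarrow> real^'i \<Rightarrow> (nat \<Rightarrow> 'v) \<Rightarrow> bool" where
  "in_gprod Hom n G \<longleftrightarrow> (\<forall>k\<ge>1. G k \<in> Hom (real k *\<^sub>R n, 0))"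

text \<open>Elements of the completion supported on the ray l + N (n,0), by coefficient at l + c (n,0);
the adjoint (commutator) action of G, and exp(ad G).\<close>
definition ad_ray :: "(nat \<Rightarrow> 'v::real_algebra_1) \<Rightarrow> (nat \<Rightarrow> 'v) \<Rightarrow> nat \<Rightarrow> 'v" where
  "ad_ray G f c = (\<Sum>j\<in>{1..c}. G j * f (c - j) - f (c - j) * G j)"

definition exp_ray :: "(nat \<Rightarrow> 'v::real_algebra_1) \<Rightarrow> 'v \<Rightarrow> nat \<Rightarrow> 'v" where
  "exp_ray G x c = (\<Sum>k\<in>{0..c}. (1 / fact k) *\<^sub>R ((ad_ray G ^^ k) (\<lambda>c'. if c' = 0 then x else 0) c))"

definition is_wall :: "('i::finite vpair \<Rightarrow> 'v::real_algebra_1 set) \<Rightarrow> 'i vpair set \<Rightarrow> real^'i \<Rightarrow> (nat \<Rightarrow> 'v) \<Rightarrow> bool" where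
  "is_wall Hom d n g \<longleftrightarrow> Nplus n \<and> primitive_vec n \<and>
     (\<exists>x0 C. d = (\<lambda>v. x0 + v) ` C \<and> rat_poly_cone C \<and> C \<subseteq> {v. n \<bullet> fst v = 0}
        \<and> aff_dim C = int DIM('i vpair) - 1) \<and>
     in_gprod Hom n g"

definition Supp :: "'w set \<Rightarrow> ('w \<Rightarrow> ('i::finite) vpair set) \<Rightarrow> 'i vpair set" where
  "Supp W supp = (\<Union>w\<in>W. supp w)"

definition Joints :: "'w set \<Rightarrow> ('w \<Rightarrow> ('i::finite) vpair set) \<Rightarrow> 'i vpair set" where
  "Joints W supp = (\<Union>w\<in>W. rel_frontier (supp w)) \<union>
     (\<Union>w\<in>W. \<Union>w'\<in>W. if aff_dim (supp w \<inter> supp w') \<le> int DIM('i vpair) - 2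
                       then supp w \<inter> supp w' else {})"

text \<open>Scattering diagram: every wall is a wall; the only non-outgoing walls are the initial
walls with support (e_i,0)^perp and normal e_i.\<close>
definition scat_diagram :: "('i::finite \<Rightarrow> 'i \<Rightarrow> nat) \<Rightarrow> ('i vpair \<Rightarrow> 'v::real_algebra_1 set) \<Rightarrow>
    'w set \<Rightarrow> ('w \<Rightarrow> 'i vpair set) \<Rightarrow> ('w \<Rightarrow> real^'i) \<Rightarrow> ('w \<Rightarrow> nat \<Rightarrow> 'v) \<Rightarrow> bool" where
  "scat_diagram a Hom W supp nrm g \<longleftrightarrow>
     (\<forall>w\<in>W. is_wall Hom (supp w) (nrm w) (g w)) \<and>
     (\<forall>w\<in>W. (\<exists>i. nrm w = axis i 1 \<and> supp w = {v. fst v $ i = 0})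
             \<or> pprin a (nrm w, 0) \<notin> supp w)"

text \<open>Bending at a point p: a' is a homogeneous term, other than x itself, of g_p . x, where
g_p = exp(G) with G in prod_k g_{k n} for the normal n of the walls through p.\<close>
definition bend :: "('i::finite vpair \<Rightarrow> 'v::real_algebra_1 set) \<Rightarrow> 'w set \<Rightarrow> ('w \<Rightarrow> 'i vpair set) \<Rightarrow>
    ('w \<Rightarrow> real^'i) \<Rightarrow> 'i vpair \<Rightarrow> 'i vpair \<Rightarrow> 'v \<Rightarrow> 'i vpair \<Rightarrow> 'v \<Rightarrow> bool" where
  "bend Hom W supp nrm p l x l' x' \<longleftrightarrow>
     (\<exists>w\<in>W. p \<in> supp w \<and> (\<exists>G c. c \<ge> 1 \<and> in_gprod Hom (nrm w) G \<and>
        l' = l + (real c *\<^sub>R nrm w, 0) \<and> x' = exp_ray G x c \<and> x' \<noteq> 0))"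

definition broken_line :: "('i::finite \<Rightarrow> 'i \<Rightarrow> nat) \<Rightarrow> ('i vpair \<Rightarrow> 'v::real_algebra_1 set) \<Rightarrow>
    ('i vpair \<Rightarrow> 'v) \<Rightarrow> 'w set \<Rightarrow> ('w \<Rightarrow> 'i vpair set) \<Rightarrow> ('w \<Rightarrow> real^'i) \<Rightarrow>
    'i vpair \<Rightarrow> 'i vpair \<Rightarrow> (real \<Rightarrow> 'i vpair) \<Rightarrow> nat \<Rightarrow> (nat \<Rightarrow> real) \<Rightarrow>
    (nat \<Rightarrow> 'i vpair) \<Rightarrow> (nat \<Rightarrow> 'v) \<Rightarrow> bool" where
  "broken_line a Hom z W supp nrm l0 \<theta> \<gamma> L t l x \<longleftrightarrow>
     continuous_on {..0} \<gamma> \<and> (\<forall>\<tau>\<le>0. \<gamma> \<tau> \<notin> Joints W supp) \<and>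
     (\<forall>i<L. t i \<le> t (Suc i)) \<and> t L = 0 \<and>
     (\<forall>i\<le>L. l i \<noteq> 0 \<and> integral_pair (l i) \<and> x i \<in> Hom (l i)) \<and>
     l 0 = l0 \<and> \<gamma> 0 = \<theta> \<and> x 0 = z l0 \<and>
     (\<forall>i\<le>L. \<forall>\<tau>. (if i = 0 then \<tau> < t 0 else t (i - 1) < \<tau> \<and> \<tau> < t i) \<longrightarrow>
        (\<gamma> has_vector_derivative - pprin a (l i)) (at \<tau>)) \<and>
     (\<forall>i<L. \<gamma> (t i) \<in> Supp W supp \<and> bend Hom W supp nrm (\<gamma> (t i)) (l i) (x i) (l (Suc i)) (x (Suc i)))"

end

theory Submission
  imports Defs
begin

(* Starting from the exponent (0, m) with m = pi^*(n), every bend only adds multiples of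
   (n_d, 0), so all exponents l_i keep second component m. The M-component of the velocity
   -p^*(l_i) = -(pi^*(fst l_i) - m, fst l_i) is therefore pi^*(n - fst l_i), which lies in the
   subspace pi^*(N_R). A continuous, piecewise differentiable curve whose velocity always lies
   in a subspace V stays in a translate of V, since every linear functional vanishing on V is
   constant along it. *)

lemma diff_in_subspace_if_vector_derivative_in_subspace:
  fixes f :: "real \<Rightarrow> 'a::euclidean_space"
  assumes V: "subspace V" and S: "convex S" "finite K" "continuous_on S f"
    and deriv: "\<And>s. s \<in> S - K \<Longrightarrow> \<exists>D\<in>V. (f has_vector_derivative D) (at s within S)"
    and "x \<in> S" "y \<in> S"
  shows "f y - f x \<in> V"
proof -
  have "u \<bullet> f y = u \<bullet> f x" if u: "u \<in> orthogonal_comp V" for u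
  proof (rule has_derivative_zero_unique_strong_convex[OF S(1,2), where f = "\<lambda>s. u \<bullet> f s"])
    show "continuous_on S (\<lambda>s. u \<bullet> f s)"
      using S(3) by (intro continuous_intros)
    fix s assume "s \<in> S - K"
    then obtain D where "D \<in> V" and D: "(f has_vector_derivative D) (at s within S)"
      using deriv by blast
    then have "u \<bullet> D = 0"
      using u by (simp add: orthogonal_comp_def orthogonal_def inner_commute)
    with bounded_linear.has_vector_derivative[OF bounded_linear_inner_right[of u] D]
    show "((\<lambda>s. u \<bullet> f s) has_derivative (\<lambda>h. 0)) (at s within S)"
      by (simp add: has_vector_derivative_def)
  qed (use assms in auto)
  then have "f y - f x \<in> orthogonal_comp (orthogonal_comp V)"
    by (auto simp: orthogonal_comp_def orthogonal_def inner_diff_right inner_commute)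
  then show ?thesis
    using orthogonal_comp_self[OF V] by simp
qed

lemma exists_piece_of_breakpoints:
  fixes t :: "nat \<Rightarrow> real"
  assumes "y < t L" "y \<notin> t ` {..L}"
  shows "\<exists>i\<le>L. (if i = 0 then y < t 0 else t (i - 1) < y \<and> y < t i)"
proof (cases "y < t 0")
  case True
  then show ?thesis by (intro exI[of _ 0]) auto
next
  case False
  define i where "i = (LEAST j. y < t j)"
  have "y < t i" and "i \<le> L"
    unfolding i_def using assms(1) by (auto intro: LeastI Least_le)
  moreover have "i \<noteq> 0"
    using \<open>y < t i\<close> False by (cases i) auto
  moreover have "\<not> y < t (i - 1)"
    unfolding i_def by (rule not_less_Least) (use \<open>i \<noteq> 0\<close> in \<open>simp add: i_def\<close>)
  moreover have "y \<noteq> t (i - 1)"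
    using assms(2) \<open>i \<le> L\<close> by auto
  ultimately show ?thesis by (intro exI[of _ i]) auto
qed

lemma broken_line_has_exponent_velocity:
  assumes bl: "broken_line a Hom z W supp nrm l0 \<theta> \<gamma> L t l x"
    and "s \<le> 0" "s \<notin> t ` {..L}"
  obtains i where "i \<le> L" "(\<gamma> has_vector_derivative - pprin a (l i)) (at s)"
proof -
  have "t L = 0"
    and der: "\<And>i s. i \<le> L \<Longrightarrow> (if i = 0 then s < t 0 else t (i - 1) < s \<and> s < t i) \<Longrightarrow>
        (\<gamma> has_vector_derivative - pprin a (l i)) (at s)"
    using bl by (auto simp: broken_line_def)
  then have "s < t L"
    using assms(2,3) by (cases "s = 0") auto
  then obtain i where "i \<le> L" "if i = 0 then s < t 0 else t (i - 1) < s \<and> s < t i"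
    using exists_piece_of_breakpoints assms(3) by blast
  then show ?thesis
    using der that by blast
qed

lemma broken_line_snd_exponent:
  assumes bl: "broken_line a Hom z W supp nrm l0 \<theta> \<gamma> L t l x"
  shows "i \<le> L \<Longrightarrow> snd (l i) = snd l0"
proof (induction i)
  case 0
  then show ?case using bl by (simp add: broken_line_def)
next
  case (Suc i)
  then have "bend Hom W supp nrm (\<gamma> (t i)) (l i) (x i) (l (Suc i)) (x (Suc i))"
    using bl by (simp add: broken_line_def)
  with Suc show ?case by (auto simp: bend_def)
qed

lemma linear_piS: "linear (piS a)"
proof (rule linearI)
  fix b1 b2 :: "real^'a" and r :: real
  show "piS a (b1 + b2) = piS a b1 + piS a b2"
    by (auto simp: piS_def vec_eq_iff sum.distrib[symmetric] ring_distribs intro!: sum.cong)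
  show "piS a (r *\<^sub>R b1) = r *\<^sub>R piS a b1"
    by (simp add: piS_def vec_eq_iff sum_distrib_left ring_distribs mult.assoc)
qed

theorem lemma5p5:
  fixes a :: "'i::finite \<Rightarrow> 'i \<Rightarrow> nat"
    and Hom :: "'i vpair \<Rightarrow> 'v::real_algebra_1 set"
    and z :: "'i vpair \<Rightarrow> 'v"
    and W :: "'w set" and supp :: "'w \<Rightarrow> 'i vpair set" and nrm :: "'w \<Rightarrow> real^'i"
    and g :: "'w \<Rightarrow> nat \<Rightarrow> 'v"
    and m :: "real^'i" and \<theta> :: "'i vpair"
    and \<gamma> :: "real \<Rightarrow> 'i vpair" and L :: nat and t :: "nat \<Rightarrow> real"
    and l :: "nat \<Rightarrow> 'i vpair" and x :: "nat \<Rightarrow> 'v"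
  assumes no_loops: "\<forall>i. a i i = 0"
    and no_2cycles: "\<forall>i j. a i j = 0 \<or> a j i = 0"
    and graded: "graded_alg Hom"
    and zhom: "\<forall>lam. z lam \<in> Hom lam \<and> z lam \<noteq> 0"
    and diagram: "scat_diagram a Hom W supp nrm g"
    and m_in: "\<exists>n. integral_vec n \<and> m = piS a n"
    and theta: "\<theta> \<notin> Supp W supp"
    and bl: "broken_line a Hom z W supp nrm (0, m) \<theta> \<gamma> L t l x"
  shows "\<forall>\<tau>\<le>0. fst (\<gamma> \<tau>) \<in> {fst \<theta> + piS a v | v. True}"
proof (intro allI impI)
  fix \<tau> :: real assume "\<tau> \<le> 0"
  obtain n where m: "m = piS a n" using m_in by blast
  have "fst (\<gamma> \<tau>) - fst (\<gamma> 0) \<in> range (piS a)"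
  proof (rule diff_in_subspace_if_vector_derivative_in_subspace[where K = "t ` {..L}"])
    show "subspace (range (piS a))"
      by (rule linear_subspace_image[OF linear_piS subspace_UNIV])
    show "continuous_on {..0} (\<lambda>s. fst (\<gamma> s))"
      using bl by (auto simp: broken_line_def intro: continuous_on_fst)
    fix s assume "s \<in> {..0} - t ` {..L}"
    then obtain i where "i \<le> L" and \<gamma>': "(\<gamma> has_vector_derivative - pprin a (l i)) (at s)"
      using broken_line_has_exponent_velocity[OF bl] by auto
    have "fst (- pprin a (l i)) = piS a (n - fst (l i))"
      using broken_line_snd_exponent[OF bl \<open>i \<le> L\<close>] m
      by (simp add: pprin_def linear_diff[OF linear_piS])
    with bounded_linear.has_vector_derivative[OF bounded_linear_fst \<gamma>']
    show "\<exists>D\<in>range (piS a). ((\<lambda>s. fst (\<gamma> s)) has_vector_derivative D) (at s within {..0})"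
      by (auto intro: has_vector_derivative_at_within)
  qed (use \<open>\<tau> \<le> 0\<close> in auto)
  moreover have "\<gamma> 0 = \<theta>"
    using bl by (simp add: broken_line_def)
  ultimately obtain v where "fst (\<gamma> \<tau>) = fst \<theta> + piS a v"
    by (metis add_diff_cancel_left' diff_add_cancel imageE)
  then show "fst (\<gamma> \<tau>) \<in> {fst \<theta> + piS a v | v. True}"
    by blast
qed

end
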